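(* Let $\mathcal C$ be a real polynomial curve with proper real polynomial parametrization $(x(t),y(t))$. If $r=\deg_t x(t)$ and $s=\deg_t y(t)$ are both odd and $r\ne s$, then $\mathcal C$ does not have mirror symmetry.
   Context: A real polynomial curve is $\mathcal C=\{(x(t),y(t)):t\in\mathbb R\}$ with $x,y\in\mathbb R[t]$ not both constant; the parametrization is proper if it is injective for almost all $t$. $\mathcal C$ has mirror symmetry if there is a line such that the reflection in it maps $\mathcal C$ onto itself. *)

theory Defs
  imports Main "HOL-Computational_Algebra.Polynomial"
begin

definition poly_curve :: "real poly \<Rightarrow> real poly \<Rightarrow> (real \<times> real) set" where
  "poly_curve x y = (\<lambda>t. (poly x t, poly y t)) ` UNIV"

definition proper_param :: "real poly \<Rightarrow> real poly \<Rightarrow> bool" where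
  "proper_param x y \<longleftrightarrow>
     finite {t::real. \<exists>u. u \<noteq> t \<and> poly x u = poly x t \<and> poly y u = poly y t}"

definition reflect_line :: "real \<times> real \<Rightarrow> real \<times> real \<Rightarrow> real \<times> real \<Rightarrow> real \<times> real" where
  "reflect_line p d z =
     (let l = ((fst z - fst p) * fst d + (snd z - snd p) * snd d) / ((fst d)\<^sup>2 + (snd d)\<^sup>2)
      in (2 * (fst p + l * fst d) - fst z, 2 * (snd p + l * snd d) - snd z))"

definition mirror_symmetric :: "(real \<times> real) set \<Rightarrow> bool" where
  "mirror_symmetric C \<longleftrightarrow> (\<exists>p d. d \<noteq> (0, 0) \<and> reflect_line p d ` C = C)"

end

theory Submission
  imports Defs
begin

(* Write the plane in coordinates adapted to a line L = p + R d: the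
   coordinate "along d" is preserved by the reflection in L, and the coordinate
   "across d" is mapped to 2 * across(p) - across.  If the curve (x(t), y(t)) is
   symmetric with respect to L, then the polynomials f = along(x, y) and
   g = across(x, y) satisfy: for every t there is u with f(u) = f(t) and
   g(u) = c - g(t).  Since deg x and deg y are distinct and odd, f and g have odd
   degree.  After normalising leading coefficients, f and g tend to +oo at +oo and
   f tends to -oo at -oo.  Taking t large, g(u) = c - g(t) is very negative, which
   forces u far to the left (g is continuous and bounded below on every ray
   [R, oo)); there f(u) < 0 < f(t), a contradiction.
   The file first proves this contradiction for real functions, then the limit
   behaviour of odd-degree polynomials, then the coordinate description of the
   reflection, and finally derives the theorem. *)

lemma bounded_below_on_ray:
  fixes G :: "real \<Rightarrow> real"
  assumes lim: "filterlim G at_top at_top" and cont: "\<And>u. isCont G u"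
  obtains m where "\<And>u. u \<ge> R \<Longrightarrow> m \<le> G u"
proof -
  obtain S where S: "\<And>u. u \<ge> S \<Longrightarrow> 0 \<le> G u"
    using lim unfolding filterlim_at_top eventually_at_top_linorder by blast
  obtain M where M: "\<And>u. R \<le> u \<Longrightarrow> u \<le> max R S \<Longrightarrow> - G u \<le> M"
    using isCont_bounded[of R "max R S" "\<lambda>u. - G u"] cont by force
  have "min 0 (- M) \<le> G u" if "u \<ge> R" for u
    using S[of u] M[of u] that by (cases "S \<le> u") (auto simp: min_def le_max_iff_disj)
  then show thesis by (rule that)
qed

lemma no_reflecting_pairing:
  fixes F G :: "real \<Rightarrow> real"
  assumes F_top: "filterlim F at_top at_top" and F_bot: "filterlim F at_bot at_bot"
    and G_top: "filterlim G at_top at_top" and G_cont: "\<And>u. isCont G u"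
    and pairing: "\<And>t. \<exists>u. F u = F t \<and> G u = c - G t"
  shows False
proof -
  obtain R where "\<And>u. u \<le> R \<Longrightarrow> F u \<le> -1"
    using F_bot unfolding filterlim_at_bot eventually_at_bot_linorder by blast
  then have R: "\<And>u. u \<le> R \<Longrightarrow> F u < 0"
    by fastforce
  obtain m where m: "\<And>u. u \<ge> R \<Longrightarrow> m \<le> G u"
    using bounded_below_on_ray[OF G_top G_cont] by blast
  have "eventually (\<lambda>t. 0 < F t \<and> c - m < G t) at_top"
    using F_top G_top unfolding filterlim_at_top_dense by (intro eventually_conj) blast+
  then obtain t where t: "0 < F t" "c - m < G t"
    using eventually_happens by (auto simp: eventually_at_top_linorder)
  obtain u where u: "F u = F t" "G u = c - G t"
    using pairing by blast
  have "u < R"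
    using m[of u] u(2) t(2) by (cases "u \<ge> R") auto
  then show False
    using R[of u] u(1) t(1) by simp
qed

lemma odd_degree_poly_limits:
  fixes p :: "real poly"
  assumes odd: "odd (degree p)"
  shows "filterlim (\<lambda>t. lead_coeff p * poly p t) at_top at_top"
    and "filterlim (\<lambda>t. lead_coeff p * poly p t) at_bot at_bot"
proof -
  define c where "c = lead_coeff p"
  define n where "n = degree p"
  have "n > 0" using odd by (simp add: n_def odd_pos)
  then have "c \<noteq> 0" by (auto simp: c_def n_def)
  then have c2_pos: "c * c > 0" by (cases "c > 0") (auto simp: mult_neg_neg)
  have ratio: "((\<lambda>t. c * (poly p t / t ^ n)) \<longlongrightarrow> c * c) at_infinity"
    unfolding c_def n_def by (intro tendsto_mult tendsto_const poly_divide_tendsto_aux)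
  have factorization: "eventually (\<lambda>t. c * (poly p t / t ^ n) * t ^ n = c * poly p t) F"
    if "F \<le> at_infinity" for F :: "real filter"
  proof -
    have "eventually (\<lambda>t::real. norm t \<ge> 1) at_infinity"
      by (auto simp: eventually_at_infinity)
    then show ?thesis
      by (rule filter_leD[OF that, THEN eventually_mono]) auto
  qed
  have "filterlim (\<lambda>t. c * (poly p t / t ^ n) * t ^ n) at_top at_top"
    using filterlim_tendsto_pos_mult_at_top[OF tendsto_mono[OF at_top_le_at_infinity ratio]
        c2_pos filterlim_pow_at_top[OF \<open>n > 0\<close> filterlim_ident]] .
  then show "filterlim (\<lambda>t. lead_coeff p * poly p t) at_top at_top"
    using filterlim_cong[OF refl refl factorization[OF at_top_le_at_infinity]] by (simp add: c_def)
  have "filterlim (\<lambda>t. c * (poly p t / t ^ n) * t ^ n) at_bot at_bot"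
    using filterlim_tendsto_pos_mult_at_bot[OF tendsto_mono[OF at_bot_le_at_infinity ratio]
        c2_pos filterlim_pow_at_bot_odd[OF \<open>n > 0\<close> filterlim_ident]] odd
    by (simp add: n_def)
  then show "filterlim (\<lambda>t. lead_coeff p * poly p t) at_bot at_bot"
    using filterlim_cong[OF refl refl factorization[OF at_bot_le_at_infinity]] by (simp add: c_def)
qed

lemma odd_degree_no_reflecting_pairing:
  fixes f g :: "real poly"
  assumes "odd (degree f)" and "odd (degree g)"
    and pairing: "\<And>t. \<exists>u. poly f u = poly f t \<and> poly g u = c - poly g t"
  shows False
proof (rule no_reflecting_pairing)
  let ?b = "lead_coeff g"
  show "filterlim (\<lambda>t. lead_coeff f * poly f t) at_top at_top"
    and "filterlim (\<lambda>t. lead_coeff f * poly f t) at_bot at_bot"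
    and "filterlim (\<lambda>t. ?b * poly g t) at_top at_top"
    using odd_degree_poly_limits assms(1,2) by blast+
  show "isCont (\<lambda>t. ?b * poly g t) u" for u
    by (intro continuous_intros)
  show "\<exists>u. lead_coeff f * poly f u = lead_coeff f * poly f t
          \<and> ?b * poly g u = ?b * c - ?b * poly g t" for t
    using pairing[of t] by (auto simp: right_diff_distrib)
qed

lemma degree_lincomb_distinct_degrees:
  fixes x y :: "'a::field poly"
  assumes "degree x \<noteq> degree y" and "(a, b) \<noteq> (0, 0)"
  shows "degree (smult a x + smult b y) = degree x \<or> degree (smult a x + smult b y) = degree y"
proof (cases "a = 0 \<or> b = 0")
  case True
  then show ?thesis using assms(2) by auto
next
  case False
  then show ?thesis
    using assms(1) degree_add_eq_left[of "smult b y" "smult a x"]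
      degree_add_eq_right[of "smult a x" "smult b y"]
    by (cases "degree x < degree y") auto
qed

definition along :: "real \<times> real \<Rightarrow> real \<times> real \<Rightarrow> real" where
  "along d z = fst d * fst z + snd d * snd z"

definition across :: "real \<times> real \<Rightarrow> real \<times> real \<Rightarrow> real" where
  "across d z = fst d * snd z - snd d * fst z"

lemma reflect_line_coordinates:
  assumes "d \<noteq> (0, 0)"
  shows "along d (reflect_line p d z) = along d z"
    and "across d (reflect_line p d z) = 2 * across d p - across d z"
proof -
  obtain d1 d2 where d: "d = (d1, d2)" by (cases d)
  define l where "l = ((fst z - fst p) * d1 + (snd z - snd p) * d2) / (d1\<^sup>2 + d2\<^sup>2)"
  have "d1\<^sup>2 + d2\<^sup>2 \<noteq> 0" using assms d by simp
  then have l_scaled: "l * (d1\<^sup>2 + d2\<^sup>2) = (fst z - fst p) * d1 + (snd z - snd p) * d2"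
    by (simp add: l_def)
  have refl: "reflect_line p d z = (2 * (fst p + l * d1) - fst z, 2 * (snd p + l * d2) - snd z)"
    by (simp add: reflect_line_def d l_def Let_def)
  show "along d (reflect_line p d z) = along d z"
    using l_scaled unfolding refl unfolding along_def d by (simp add: algebra_simps power2_eq_square)
  show "across d (reflect_line p d z) = 2 * across d p - across d z"
    unfolding refl unfolding across_def d by (simp add: algebra_simps)
qed

theorem corollary17:
  fixes x y :: "real poly"
  assumes "degree x \<noteq> 0 \<or> degree y \<noteq> 0"
    and "proper_param x y"
    and "odd (degree x)" and "odd (degree y)"
    and "degree x \<noteq> degree y"
  shows "\<not> mirror_symmetric (poly_curve x y)"
proof
  assume "mirror_symmetric (poly_curve x y)"
  then obtain p d where d: "d \<noteq> (0, 0)"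
    and sym: "reflect_line p d ` poly_curve x y = poly_curve x y"
    unfolding mirror_symmetric_def by blast
  obtain d1 d2 where d_eq: "d = (d1, d2)" by (cases d)
  define f where "f = smult d1 x + smult d2 y"
  define g where "g = smult (- d2) x + smult d1 y"
  have coords: "poly f t = along d (poly x t, poly y t)" "poly g t = across d (poly x t, poly y t)" for t
    by (simp_all add: f_def g_def along_def across_def d_eq algebra_simps)
  have pairing: "\<exists>u. poly f u = poly f t \<and> poly g u = 2 * across d p - poly g t" for t
  proof -
    have "reflect_line p d (poly x t, poly y t) \<in> poly_curve x y"
      using sym unfolding poly_curve_def by blast
    then obtain u where "(poly x u, poly y u) = reflect_line p d (poly x t, poly y t)"
      unfolding poly_curve_def by auto
    then show ?thesis
      using reflect_line_coordinates[OF d] coords by metis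
  qed
  have "odd (degree f)" "odd (degree g)"
    using degree_lincomb_distinct_degrees[OF assms(5), of d1 d2]
      degree_lincomb_distinct_degrees[OF assms(5), of "- d2" d1] assms(3,4) d d_eq
    unfolding f_def g_def by auto
  then show False
    using odd_degree_no_reflecting_pairing pairing by blast
qed

end
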